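(* In the setting described in the context, the map $\alpha\colon\Gamma\times\Gamma\to\mathrm M_{\mathcal U}$, $\alpha(g,h)=c(g,h)\varphi_{\mathcal U}(gh)^*$, is a $2$-cocycle with respect to the isometric action $\pi(g)T=\varphi_{\mathcal U}(g)T\varphi_{\mathcal U}(g)^*$ of $\Gamma$ on $\mathrm M_{\mathcal U}$, i.e. $\pi(g)\alpha(h,k)-\alpha(gh,k)+\alpha(g,hk)-\alpha(g,h)=0$ for all $g,h,k\in\Gamma$.
   Context: Fix a non-principal ultrafilter $\mathcal U$ on $\mathbb N$; $x_n=O_{\mathcal U}(y_n)$ means $x_n\le Cy_n$ for all $n$ in a set belonging to $\mathcal U$, for some constant $C$. Let $\Gamma=\langle S\mid R\rangle$ be finitely presented ($S,R$ finite, $\mathbb F_S$ free on $S$). For each $k$ fix a unitarily invariant, submultiplicative norm $\|\cdot\|$ on $\mathrm M_k(\mathbb C)$. For $\varphi\colon S\to\mathrm U(k)$ (extended to $\mathbb F_S$), $\mathrm{def}(\varphi)=\max_{r\in R}\|\varphi(r)-1_k\|$. Let $\varphi_n\colon S\to\mathrm U(k_n)$ with $\lim_{n\to\mathcal U}\mathrm{def}(\varphi_n)=0$. Let $\mathrm M_{\mathcal U}$ be the Banach space of bounded sequences $(T_n)$, $T_n\in\mathrm M_{k_n}(\mathbb C)$, modulo those with $\lim_{n\to\mathcal U}\|T_n\|=0$, and $\mathrm U_{\mathcal U}$ the group $\prod_n\mathrm U(k_n)$ modulo the normal subgroup of sequences with $\lim_{n\to\mathcal U}\|u_n-1_{k_n}\|=0$;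 $\mathrm U_{\mathcal U}$ acts isometrically on $\mathrm M_{\mathcal U}$ by left and right multiplication. The $\varphi_n$ induce a homomorphism $\varphi_{\mathcal U}\colon\Gamma\to\mathrm U_{\mathcal U}$ sending $g$ to the class of $(\varphi_n(w))_n$ for any $w\in\mathbb F_S$ representing $g$. Fix a section $\sigma\colon\Gamma\to\mathbb F_S$ of the canonical surjection and maps $\tilde\varphi_n\colon\Gamma\to\mathrm U(k_n)$ with $\tilde\varphi_n(1_\Gamma)=1$, $\tilde\varphi_n(g^{-1})=\tilde\varphi_n(g)^*$, $\|\varphi_n(\sigma(g))-\tilde\varphi_n(g)\|=O_{\mathcal U}(\mathrm{def}(\varphi_n))$ for all $g$. Let $c_n(g,h)=(\tilde\varphi_n(g)\tilde\varphi_n(h)-\tilde\varphi_n(gh))/\mathrm{def}(\varphi_n)$ if $\mathrm{def}(\varphi_n)>0$, else $0$; each sequence $(c_n(g,h))_n$ is $O_{\mathcal U}(1)$-bounded and $c(g,h)\in\mathrm M_{\mathcal U}$ denotes its class. *)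

theory Defs
  imports "Jordan_Normal_Form.Matrix" "HOL-Algebra.Group"
begin

definition nonprincipal_ultrafilter :: "nat filter \<Rightarrow> bool" where
  "nonprincipal_ultrafilter U \<longleftrightarrow> U \<noteq> bot \<and>
     (\<forall>P. eventually P U \<or> eventually (\<lambda>n. \<not> P n) U) \<and>
     (\<forall>m. eventually (\<lambda>n. n \<noteq> m) U)"

definition bigO_U :: "nat filter \<Rightarrow> (nat \<Rightarrow> real) \<Rightarrow> (nat \<Rightarrow> real) \<Rightarrow> bool" where
  "bigO_U U x y \<longleftrightarrow> (\<exists>C. eventually (\<lambda>n. x n \<le> C * y n) U)"

definition adj :: "complex mat \<Rightarrow> complex mat" where
  "adj A = mat (dim_col A) (dim_row A) (\<lambda>(i,j). cnj (A $$ (j,i)))"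

definition unitary_k :: "nat \<Rightarrow> complex mat \<Rightarrow> bool" where
  "unitary_k k A \<longleftrightarrow> A \<in> carrier_mat k k \<and> adj A * A = 1\<^sub>m k \<and> A * adj A = 1\<^sub>m k"

definition ui_submult_norm :: "nat \<Rightarrow> (complex mat \<Rightarrow> real) \<Rightarrow> bool" where
  "ui_submult_norm k N \<longleftrightarrow>
     (\<forall>A\<in>carrier_mat k k. N A \<ge> 0 \<and> (N A = 0 \<longleftrightarrow> A = 0\<^sub>m k k)) \<and>
     (\<forall>A\<in>carrier_mat k k. \<forall>c. N (c \<cdot>\<^sub>m A) = cmod c * N A) \<and>
     (\<forall>A\<in>carrier_mat k k. \<forall>B\<in>carrier_mat k k. N (A + B) \<le> N A + N B) \<and>
     (\<forall>A\<in>carrier_mat k k. \<forall>B\<in>carrier_mat k k. N (A * B) \<le> N A * N B) \<and>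
     (\<forall>A\<in>carrier_mat k k. \<forall>u v. unitary_k k u \<longrightarrow> unitary_k k v \<longrightarrow> N (u * A * v) = N A)"

text \<open>Elements of F_S are represented by words: a letter (s, False) stands for s,
  (s, True) for s^-1.\<close>
type_synonym 's word = "('s \<times> bool) list"

definition words :: "'s set \<Rightarrow> 's word set" where
  "words S = {w. fst ` set w \<subseteq> S}"

definition inv_word :: "'s word \<Rightarrow> 's word" where
  "inv_word w = rev (map (\<lambda>(s,b). (s, \<not> b)) w)"

text \<open>Congruence on words generated by free cancellation and insertion of relators;
  its classes are exactly the elements of F_S / <<R>>.\<close>
inductive pres_eq :: "'s word set \<Rightarrow> 's word \<Rightarrow> 's word \<Rightarrow> bool" for R where
  refl: "pres_eq R w w"
| sym: "pres_eq R u v \<Longrightarrow> pres_eq R v u"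
| trans: "pres_eq R u v \<Longrightarrow> pres_eq R v w \<Longrightarrow> pres_eq R u w"
| cancel: "pres_eq R (u @ [(s,b),(s,\<not>b)] @ v) (u @ v)"
| relator: "r \<in> R \<Longrightarrow> pres_eq R (u @ r @ v) (u @ v)"

fun grp_ev :: "('g,'b) monoid_scheme \<Rightarrow> ('s \<Rightarrow> 'g) \<Rightarrow> 's word \<Rightarrow> 'g" where
  "grp_ev G f [] = \<one>\<^bsub>G\<^esub>"
| "grp_ev G f ((s,b) # w) = (if b then inv\<^bsub>G\<^esub> (f s) else f s) \<otimes>\<^bsub>G\<^esub> grp_ev G f w"

text \<open>Gamma = <S | R>: S, R finite, and the canonical map F_S \<rightarrow> Gamma (induced by gen)
  is surjective with kernel the normal closure of R.\<close>
definition finite_presentation ::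
  "('g,'b) monoid_scheme \<Rightarrow> 's set \<Rightarrow> 's word set \<Rightarrow> ('s \<Rightarrow> 'g) \<Rightarrow> bool" where
  "finite_presentation G S R gen \<longleftrightarrow> group G \<and> finite S \<and> finite R \<and> R \<subseteq> words S \<and>
     gen ` S \<subseteq> carrier G \<and>
     (\<forall>g\<in>carrier G. \<exists>w\<in>words S. grp_ev G gen w = g) \<and>
     (\<forall>u\<in>words S. \<forall>v\<in>words S. grp_ev G gen u = grp_ev G gen v \<longleftrightarrow> pres_eq R u v)"

fun mat_ev :: "nat \<Rightarrow> ('s \<Rightarrow> complex mat) \<Rightarrow> 's word \<Rightarrow> complex mat" where
  "mat_ev k f [] = 1\<^sub>m k"
| "mat_ev k f ((s,b) # w) = (if b then adj (f s) else f s) * mat_ev k f w"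

text \<open>def(phi) = max over r in R of N(phi(r) - 1_k)  (taken to be 0 if R is empty).\<close>
definition dfct :: "nat \<Rightarrow> (complex mat \<Rightarrow> real) \<Rightarrow> 's word set \<Rightarrow> ('s \<Rightarrow> complex mat) \<Rightarrow> real" where
  "dfct k N R f = Max (insert 0 ((\<lambda>r. N (mat_ev k f r - 1\<^sub>m k)) ` R))"

text \<open>A bounded sequence (T n), T n in M_{k n}(C), represents 0 in M_U iff lim_U N(T n) = 0.\<close>
definition zero_in_MU :: "nat filter \<Rightarrow> (nat \<Rightarrow> nat) \<Rightarrow> (nat \<Rightarrow> complex mat \<Rightarrow> real)
     \<Rightarrow> (nat \<Rightarrow> complex mat) \<Rightarrow> bool" where
  "zero_in_MU U k N T \<longleftrightarrow> ((\<lambda>n. N (k n) (T n)) \<longlongrightarrow> 0) U"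

definition phiU_rep :: "(nat \<Rightarrow> nat) \<Rightarrow> (nat \<Rightarrow> 's \<Rightarrow> complex mat) \<Rightarrow> ('g \<Rightarrow> 's word)
     \<Rightarrow> nat \<Rightarrow> 'g \<Rightarrow> complex mat" where
  "phiU_rep k phi sigma n g = mat_ev (k n) (phi n) (sigma g)"

definition c_rep :: "('g,'b) monoid_scheme \<Rightarrow> (nat \<Rightarrow> nat) \<Rightarrow> (nat \<Rightarrow> complex mat \<Rightarrow> real)
     \<Rightarrow> 's word set \<Rightarrow> (nat \<Rightarrow> 's \<Rightarrow> complex mat) \<Rightarrow> (nat \<Rightarrow> 'g \<Rightarrow> complex mat)
     \<Rightarrow> nat \<Rightarrow> 'g \<Rightarrow> 'g \<Rightarrow> complex mat" where
  "c_rep G k N R phi phit n g h =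
     (let d = dfct (k n) (N (k n)) R (phi n) in
      if d > 0 then (complex_of_real (1 / d)) \<cdot>\<^sub>m (phit n g * phit n h - phit n (g \<otimes>\<^bsub>G\<^esub> h))
      else 0\<^sub>m (k n) (k n))"

definition alpha_rep :: "('g,'b) monoid_scheme \<Rightarrow> (nat \<Rightarrow> nat) \<Rightarrow> (nat \<Rightarrow> complex mat \<Rightarrow> real)
     \<Rightarrow> 's word set \<Rightarrow> (nat \<Rightarrow> 's \<Rightarrow> complex mat) \<Rightarrow> ('g \<Rightarrow> 's word) \<Rightarrow> (nat \<Rightarrow> 'g \<Rightarrow> complex mat)
     \<Rightarrow> nat \<Rightarrow> 'g \<Rightarrow> 'g \<Rightarrow> complex mat" where
  "alpha_rep G k N R phi sigma phit n g h =
     c_rep G k N R phi phit n g h * adj (phiU_rep k phi sigma n (g \<otimes>\<^bsub>G\<^esub> h))"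

definition pi_rep :: "(nat \<Rightarrow> nat) \<Rightarrow> (nat \<Rightarrow> 's \<Rightarrow> complex mat) \<Rightarrow> ('g \<Rightarrow> 's word)
     \<Rightarrow> nat \<Rightarrow> 'g \<Rightarrow> complex mat \<Rightarrow> complex mat" where
  "pi_rep k phi sigma n g T = phiU_rep k phi sigma n g * T * adj (phiU_rep k phi sigma n g)"

end

theory Submission
  imports Defs
begin

text \<open>Write \<open>P x\<close> for \<open>\<phi>\<^sub>n(\<sigma> x)\<close> and \<open>T x\<close> for \<open>phit\<^sub>n x\<close>. Both are unitary;
  \<open>P\<close> is multiplicative up to \<open>O(def)\<close>, because \<open>\<sigma>(x)\<sigma>(y)\<close> and \<open>\<sigma>(xy)\<close> are related by
  a fixed derivation from the relators, and \<open>T\<close> is \<open>O(def)\<close>-close to \<open>P\<close>. The defect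
  \<open>X(x,y) = T x T y - T(xy)\<close> satisfies \<open>T g X(h,l) - X(gh,l) + X(g,hl) - X(g,h) T l = 0\<close>
  exactly, so the coboundary of \<open>X(x,y) P(xy)\<^sup>*\<close> under conjugation by \<open>P\<close> splits into four
  terms, each a product of two \<open>O(def)\<close> factors and unitaries. Dividing by \<open>def\<close>, the
  coboundary of \<open>\<alpha>\<close> is \<open>O(def)\<close> and so vanishes in the ultraproduct.\<close>

section \<open>Adjoints, unitaries and matrix identities\<close>

lemma adj_carrier [simp]: "A \<in> carrier_mat m n \<Longrightarrow> adj A \<in> carrier_mat n m"
  by (auto simp: adj_def)

lemma adj_adj: "A \<in> carrier_mat m n \<Longrightarrow> adj (adj A) = A"
  by (intro eq_matI) (auto simp: adj_def)

lemma adj_one [simp]: "adj (1\<^sub>m m) = 1\<^sub>m m"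
  by (intro eq_matI) (auto simp: adj_def)

lemma adj_mult:
  assumes A: "A \<in> carrier_mat m n" and B: "B \<in> carrier_mat n p"
  shows "adj (A * B) = adj B * adj A"
proof (rule eq_matI)
  fix i j assume i: "i < dim_row (adj B * adj A)" and j: "j < dim_col (adj B * adj A)"
  have "adj (A * B) $$ (i, j) = (\<Sum>x<n. cnj (A $$ (j, x)) * cnj (B $$ (x, i)))"
    using A B i j by (auto simp: adj_def scalar_prod_def sum_distrib_left lessThan_atLeast0)
  also have "\<dots> = (adj B * adj A) $$ (i, j)"
    using A B i j
    by (auto simp: adj_def scalar_prod_def lessThan_atLeast0 mult.commute intro: sum.cong)
  finally show "adj (A * B) $$ (i, j) = (adj B * adj A) $$ (i, j)" .
qed (use A B in \<open>auto simp: adj_def\<close>)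

lemmas square_mat_closed = mult_carrier_mat[of _ m m _ m] minus_carrier_mat[of _ m m] for m

lemma unitary_carrier: "unitary_k m u \<Longrightarrow> u \<in> carrier_mat m m"
  by (simp add: unitary_k_def)

lemma unitary_one: "unitary_k m (1\<^sub>m m)"
  by (simp add: unitary_k_def)

lemma unitary_adj: "unitary_k m u \<Longrightarrow> unitary_k m (adj u)"
  by (auto simp: unitary_k_def adj_adj)

lemma unitary_mult:
  assumes u: "unitary_k m u" and v: "unitary_k m v"
  shows "unitary_k m (u * v)"
proof -
  have c: "u \<in> carrier_mat m m" "v \<in> carrier_mat m m"
    using u v by (auto simp: unitary_k_def)
  have "adj (u * v) * (u * v) = adj v * (adj u * u) * v"
    using c by (simp add: adj_mult assoc_mult_mat[of _ m m _ m _ m] square_mat_closed)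
  moreover have "(u * v) * adj (u * v) = u * (v * adj v) * adj u"
    using c by (simp add: adj_mult assoc_mult_mat[of _ m m _ m _ m] square_mat_closed)
  ultimately show ?thesis
    using u v c by (simp add: unitary_k_def left_mult_one_mat[of _ m m] right_mult_one_mat[of _ m m])
qed

lemma mat_minus_ring_minus:
  fixes A B :: "'a :: comm_ring_1 mat"
  assumes "A \<in> carrier_mat m m" "B \<in> carrier_mat m m"
  shows "A \<ominus>\<^bsub>ring_mat TYPE('a) m b\<^esub> B = A - B"
proof -
  interpret R: ring "ring_mat TYPE('a) m b" by (rule ring_mat)
  have "\<ominus>\<^bsub>ring_mat TYPE('a) m b\<^esub> B = - B"
    using assms by (intro R.minus_equality) (auto simp: ring_mat_simps)
  then show ?thesis
    using assms by (simp add: a_minus_def ring_mat_simps add_uminus_minus_mat)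
qed

lemmas mat_ring_ops = ring_mat_simps mat_minus_ring_minus

text \<open>Matrix identities are proved in an abstract ring and transferred through
  \<^const>\<open>ring_mat\<close>, where the \<open>algebra\<close> method normalises.\<close>

lemma (in ring) mult_diff_telescope:
  assumes "x \<in> carrier R" "y \<in> carrier R" "z \<in> carrier R"
    "a \<in> carrier R" "b \<in> carrier R" "d \<in> carrier R"
  shows "x \<otimes> y \<ominus> z = (x \<ominus> a) \<otimes> y \<oplus> a \<otimes> (y \<ominus> b) \<oplus> (a \<otimes> b \<ominus> d) \<oplus> (d \<ominus> z)"
  using assms by algebra

lemma (in ring) diff_inverses_factor:
  assumes "a \<in> carrier R" "b \<in> carrier R" "d \<in> carrier R" "a' \<in> carrier R" "d' \<in> carrier R"
    and "a' \<otimes> a = \<one>" "d \<otimes> d' = \<one>"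
  shows "b \<otimes> d' \<ominus> a' = a' \<otimes> (a \<otimes> b \<ominus> d) \<otimes> d'"
proof -
  have "a' \<otimes> (a \<otimes> b \<ominus> d) \<otimes> d' = (a' \<otimes> a) \<otimes> b \<otimes> d' \<ominus> a' \<otimes> (d \<otimes> d')"
    using assms(1-5) by algebra
  also have "\<dots> = b \<otimes> d' \<ominus> a'"
    using assms by (simp add: m_assoc)
  finally show ?thesis by simp
qed

lemma (in ring) mult_diff_one_factor:
  assumes "a \<in> carrier R" "b \<in> carrier R" "c \<in> carrier R"
  shows "a \<otimes> (b \<otimes> c) \<ominus> a \<otimes> c = a \<otimes> ((b \<ominus> \<one>) \<otimes> c)"
  using assms by algebra

text \<open>Read \<open>pX\<close> as \<open>P X\<close>, \<open>tX\<close> as \<open>T X\<close> and primes as adjoints.\<close>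

lemma (in ring) cocycle_defect_expansion:
  assumes "pg \<in> carrier R" "pgh' \<in> carrier R" "phl' \<in> carrier R" "pghl' \<in> carrier R"
    "pg' \<in> carrier R" "pl \<in> carrier R"
    "tg \<in> carrier R" "th \<in> carrier R" "tL \<in> carrier R"
    "tgh \<in> carrier R" "thl \<in> carrier R" "tghl \<in> carrier R"
  shows "pg \<otimes> ((th \<otimes> tL \<ominus> thl) \<otimes> phl') \<otimes> pg' \<ominus> (tgh \<otimes> tL \<ominus> tghl) \<otimes> pghl'
      \<oplus> (tg \<otimes> thl \<ominus> tghl) \<otimes> pghl' \<ominus> (tg \<otimes> th \<ominus> tgh) \<otimes> pgh'
    = (pg \<ominus> tg) \<otimes> (th \<otimes> tL \<ominus> thl) \<otimes> phl' \<otimes> pg'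
      \<oplus> tg \<otimes> (th \<otimes> tL \<ominus> thl) \<otimes> (phl' \<otimes> pg' \<ominus> pghl')
      \<oplus> (tg \<otimes> th \<ominus> tgh) \<otimes> (tL \<ominus> pl) \<otimes> pghl'
      \<oplus> (tg \<otimes> th \<ominus> tgh) \<otimes> (pl \<otimes> pghl' \<ominus> pgh')"
  using assms by algebra

lemma mat_mult_adj_diff:
  fixes a b d :: "complex mat"
  assumes a: "unitary_k m a" and b: "b \<in> carrier_mat m m" and d: "unitary_k m d"
  shows "b * adj d - adj a = adj a * (a * b - d) * adj d"
proof -
  interpret R: ring "ring_mat TYPE(complex) m ()" by (rule ring_mat)
  show ?thesis
    using R.diff_inverses_factor[of a b d "adj a" "adj d"] a b d
    by (simp add: mat_ring_ops square_mat_closed unitary_k_def)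
qed

section \<open>Unitarily invariant norms\<close>

locale ui_norm =
  fixes m :: nat and N :: "complex mat \<Rightarrow> real"
  assumes ui_submult_norm: "ui_submult_norm m N"
begin

lemma N_nonneg: "A \<in> carrier_mat m m \<Longrightarrow> 0 \<le> N A"
  using ui_submult_norm by (simp add: ui_submult_norm_def)

lemma N_zero [simp]: "N (0\<^sub>m m m) = 0"
  using ui_submult_norm by (simp add: ui_submult_norm_def)

lemma N_smult: "A \<in> carrier_mat m m \<Longrightarrow> N (c \<cdot>\<^sub>m A) = cmod c * N A"
  using ui_submult_norm by (simp add: ui_submult_norm_def)

lemma N_add_le: "A \<in> carrier_mat m m \<Longrightarrow> B \<in> carrier_mat m m \<Longrightarrow> N (A + B) \<le> N A + N B"
  using ui_submult_norm by (simp add: ui_submult_norm_def)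

lemma N_add4_le:
  assumes "A \<in> carrier_mat m m" "B \<in> carrier_mat m m" "C \<in> carrier_mat m m" "D \<in> carrier_mat m m"
  shows "N (A + B + C + D) \<le> N A + N B + N C + N D"
  using N_add_le[of A B] N_add_le[of "A + B" C] N_add_le[of "A + B + C" D] assms by simp

lemma N_mult_le: "A \<in> carrier_mat m m \<Longrightarrow> B \<in> carrier_mat m m \<Longrightarrow> N (A * B) \<le> N A * N B"
  using ui_submult_norm by (simp add: ui_submult_norm_def)

lemma N_mult_le_mult:
  assumes "A \<in> carrier_mat m m" "B \<in> carrier_mat m m" "N A \<le> x" "N B \<le> y"
  shows "N (A * B) \<le> x * y"
proof -
  have "N (A * B) \<le> N A * N B"
    using assms by (simp add: N_mult_le)
  also have "\<dots> \<le> x * y"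
    using assms N_nonneg by (intro mult_mono) (auto intro: order_trans)
  finally show ?thesis .
qed

lemma N_unitary_left:
  assumes "unitary_k m u" "A \<in> carrier_mat m m"
  shows "N (u * A) = N A"
proof -
  have "N (u * A * 1\<^sub>m m) = N A"
    using ui_submult_norm assms unitary_one[of m] unfolding ui_submult_norm_def by blast
  then show ?thesis
    using assms by (simp add: unitary_k_def)
qed

lemma N_unitary_right:
  assumes "unitary_k m u" "A \<in> carrier_mat m m"
  shows "N (A * u) = N A"
proof -
  have "N (1\<^sub>m m * A * u) = N A"
    using ui_submult_norm assms unitary_one[of m] unfolding ui_submult_norm_def by blast
  then show ?thesis
    using assms by simp
qed

lemma N_diff_commute:
  assumes "A \<in> carrier_mat m m" "B \<in> carrier_mat m m"
  shows "N (A - B) = N (B - A)"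
proof -
  have "A - B = (-1) \<cdot>\<^sub>m (B - A)"
    using assms by (intro eq_matI) auto
  then show ?thesis
    using N_smult[of "B - A" "-1"] assms by (simp add: minus_carrier_mat)
qed

lemma N_diff_triangle:
  assumes "A \<in> carrier_mat m m" "B \<in> carrier_mat m m" "C \<in> carrier_mat m m"
  shows "N (A - C) \<le> N (A - B) + N (B - C)"
proof -
  have "A - C = (A - B) + (B - C)"
    using assms by (intro eq_matI) auto
  then show ?thesis
    using N_add_le[of "A - B" "B - C"] assms by (simp add: minus_carrier_mat)
qed

lemma N_mult_adj_diff:
  assumes a: "unitary_k m a" and b: "b \<in> carrier_mat m m" and d: "unitary_k m d"
  shows "N (b * adj d - adj a) = N (a * b - d)"
proof -
  have c: "a \<in> carrier_mat m m" "d \<in> carrier_mat m m"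
    using a d by (auto simp: unitary_carrier)
  have "N (adj a * (a * b - d) * adj d) = N (a * b - d)"
    using N_unitary_left[OF unitary_adj[OF a]] N_unitary_right[OF unitary_adj[OF d]] b c
    by (simp add: square_mat_closed)
  then show ?thesis
    using mat_mult_adj_diff[OF a b d] by simp
qed

lemma N_adj_diff:
  assumes a: "unitary_k m a" and d: "unitary_k m d"
  shows "N (adj a - adj d) = N (a - d)"
proof -
  have c: "a \<in> carrier_mat m m" "d \<in> carrier_mat m m"
    using a d by (auto simp: unitary_carrier)
  have "N (adj a - adj d) = N (1\<^sub>m m * adj a - adj d)"
    using c by (simp add: left_mult_one_mat[of "adj a" m m])
  also have "\<dots> = N (d - a)"
    using N_mult_adj_diff[OF d _ a] c by (simp add: right_mult_one_mat[of d m m])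
  finally show ?thesis
    using N_diff_commute c by simp
qed

end


section \<open>Near-representations and the defect cochain\<close>

definition mult_defect :: "('g, 'b) monoid_scheme \<Rightarrow> ('g \<Rightarrow> complex mat) \<Rightarrow> 'g \<Rightarrow> 'g \<Rightarrow> complex mat"
  where "mult_defect G T x y = T x * T y - T (x \<otimes>\<^bsub>G\<^esub> y)"

text \<open>Divided by the defect of the representation, this is the cochain \<open>\<alpha>\<close>.\<close>

definition defect_cochain ::
  "('g, 'b) monoid_scheme \<Rightarrow> ('g \<Rightarrow> complex mat) \<Rightarrow> ('g \<Rightarrow> complex mat) \<Rightarrow> 'g \<Rightarrow> 'g \<Rightarrow> complex mat"
  where "defect_cochain G P T x y = mult_defect G T x y * adj (P (x \<otimes>\<^bsub>G\<^esub> y))"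

definition coboundary ::
  "('g, 'b) monoid_scheme \<Rightarrow> ('g \<Rightarrow> complex mat) \<Rightarrow> ('g \<Rightarrow> 'g \<Rightarrow> complex mat) \<Rightarrow> 'g \<Rightarrow> 'g \<Rightarrow> 'g
     \<Rightarrow> complex mat"
  where "coboundary G P A g h l =
    P g * A h l * adj (P g) - A (g \<otimes>\<^bsub>G\<^esub> h) l + A g (h \<otimes>\<^bsub>G\<^esub> l) - A g h"

lemma coboundary_smult:
  assumes "P g \<in> carrier_mat m m" "A h l \<in> carrier_mat m m" "A (g \<otimes>\<^bsub>G\<^esub> h) l \<in> carrier_mat m m"
    "A g (h \<otimes>\<^bsub>G\<^esub> l) \<in> carrier_mat m m" "A g h \<in> carrier_mat m m"
  shows "coboundary G P (\<lambda>x y. c \<cdot>\<^sub>m A x y) g h l = c \<cdot>\<^sub>m coboundary G P A g h l"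
proof -
  let ?X = "P g * A h l * adj (P g)"
  have X: "P g * (c \<cdot>\<^sub>m A h l) * adj (P g) = c \<cdot>\<^sub>m ?X"
    using assms by (simp add: mult_smult_distrib[of _ m m _ m] mult_smult_assoc_mat[of _ m m _ m]
        square_mat_closed)
  have dims: "?X \<in> carrier_mat m m" "A (g \<otimes>\<^bsub>G\<^esub> h) l \<in> carrier_mat m m"
    "A g (h \<otimes>\<^bsub>G\<^esub> l) \<in> carrier_mat m m" "A g h \<in> carrier_mat m m"
    using assms by (simp_all add: square_mat_closed)
  show ?thesis
    unfolding coboundary_def X using dims[THEN carrier_matD(1)] dims[THEN carrier_matD(2)]
    by (intro eq_matI) (simp_all add: right_diff_distrib distrib_left)
qed

locale unitary_maps = ui_norm m N + G: group G
  for m N and G :: "('g, 'b) monoid_scheme" +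
  fixes P T :: "'g \<Rightarrow> complex mat"
  assumes P_unitary: "x \<in> carrier G \<Longrightarrow> unitary_k m (P x)"
    and T_unitary: "x \<in> carrier G \<Longrightarrow> unitary_k m (T x)"
begin

lemma P_carrier [simp]: "x \<in> carrier G \<Longrightarrow> P x \<in> carrier_mat m m"
  and T_carrier [simp]: "x \<in> carrier G \<Longrightarrow> T x \<in> carrier_mat m m"
  using P_unitary T_unitary unitary_carrier by blast+

lemma mult_defect_carrier [simp]:
  "x \<in> carrier G \<Longrightarrow> y \<in> carrier G \<Longrightarrow> mult_defect G P x y \<in> carrier_mat m m"
  "x \<in> carrier G \<Longrightarrow> y \<in> carrier G \<Longrightarrow> mult_defect G T x y \<in> carrier_mat m m"
  by (simp_all add: mult_defect_def square_mat_closed)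

lemma defect_cochain_carrier:
  "x \<in> carrier G \<Longrightarrow> y \<in> carrier G \<Longrightarrow> defect_cochain G P T x y \<in> carrier_mat m m"
  by (simp add: defect_cochain_def square_mat_closed)

lemma mult_defect_norm_le:
  assumes x: "x \<in> carrier G" and y: "y \<in> carrier G"
    and close: "\<And>z. z \<in> {x, y, x \<otimes>\<^bsub>G\<^esub> y} \<Longrightarrow> N (P z - T z) \<le> e"
    and mult: "N (mult_defect G P x y) \<le> e"
  shows "N (mult_defect G T x y) \<le> 4 * e"
proof -
  interpret R: ring "ring_mat TYPE(complex) m ()" by (rule ring_mat)
  let ?xy = "x \<otimes>\<^bsub>G\<^esub> y"
  have xy: "?xy \<in> carrier G"
    using x y by simp
  have "mult_defect G T x y = (T x - P x) * T y + P x * (T y - P y)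
      + mult_defect G P x y + (P ?xy - T ?xy)"
    using R.mult_diff_telescope[of "T x" "T y" "T ?xy" "P x" "P y" "P ?xy"] x y xy
    by (simp add: mult_defect_def mat_ring_ops square_mat_closed)
  also have "N \<dots> \<le> N ((T x - P x) * T y) + N (P x * (T y - P y))
      + N (mult_defect G P x y) + N (P ?xy - T ?xy)"
    using x y xy by (intro N_add4_le) (simp_all add: square_mat_closed)
  also have "N ((T x - P x) * T y) = N (P x - T x)"
    using N_unitary_right[OF T_unitary[OF y]] N_diff_commute x by (simp add: square_mat_closed)
  also have "N (P x * (T y - P y)) = N (P y - T y)"
    using N_unitary_left[OF P_unitary[OF x]] N_diff_commute y by (simp add: square_mat_closed)
  finally show ?thesis
    using close[of x] close[of y] close[of ?xy] mult by simp
qed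

lemma coboundary_defect_cochain_expansion:
  assumes g: "g \<in> carrier G" and h: "h \<in> carrier G" and l: "l \<in> carrier G"
  shows "coboundary G P (defect_cochain G P T) g h l =
      (P g - T g) * mult_defect G T h l * adj (P (h \<otimes>\<^bsub>G\<^esub> l)) * adj (P g)
    + T g * mult_defect G T h l * (adj (P (h \<otimes>\<^bsub>G\<^esub> l)) * adj (P g) - adj (P (g \<otimes>\<^bsub>G\<^esub> h \<otimes>\<^bsub>G\<^esub> l)))
    + mult_defect G T g h * (T l - P l) * adj (P (g \<otimes>\<^bsub>G\<^esub> h \<otimes>\<^bsub>G\<^esub> l))
    + mult_defect G T g h * (P l * adj (P (g \<otimes>\<^bsub>G\<^esub> h \<otimes>\<^bsub>G\<^esub> l)) - adj (P (g \<otimes>\<^bsub>G\<^esub> h)))"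
proof -
  interpret R: ring "ring_mat TYPE(complex) m ()" by (rule ring_mat)
  let ?gh = "g \<otimes>\<^bsub>G\<^esub> h" and ?hl = "h \<otimes>\<^bsub>G\<^esub> l" and ?ghl = "g \<otimes>\<^bsub>G\<^esub> h \<otimes>\<^bsub>G\<^esub> l"
  have "g \<otimes>\<^bsub>G\<^esub> ?hl = ?ghl"
    using g h l by (simp add: G.m_assoc)
  then show ?thesis
    using R.cocycle_defect_expansion[of "P g" "adj (P ?gh)" "adj (P ?hl)" "adj (P ?ghl)" "adj (P g)"
        "P l" "T g" "T h" "T l" "T ?gh" "T ?hl" "T ?ghl"] g h l
    by (simp add: coboundary_def defect_cochain_def mult_defect_def mat_ring_ops square_mat_closed)
qed

lemma coboundary_defect_cochain_norm_le:
  assumes g: "g \<in> carrier G" and h: "h \<in> carrier G" and l: "l \<in> carrier G"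
    and close: "\<And>x. x \<in> {g, h, l, g \<otimes>\<^bsub>G\<^esub> h, h \<otimes>\<^bsub>G\<^esub> l} \<Longrightarrow> N (P x - T x) \<le> e"
    and mult: "\<And>x y. (x, y) \<in> {(g, h), (h, l), (g \<otimes>\<^bsub>G\<^esub> h, l), (g, h \<otimes>\<^bsub>G\<^esub> l)}
      \<Longrightarrow> N (mult_defect G P x y) \<le> e"
  shows "N (coboundary G P (defect_cochain G P T) g h l) \<le> 16 * e\<^sup>2"
proof -
  let ?gh = "g \<otimes>\<^bsub>G\<^esub> h" and ?hl = "h \<otimes>\<^bsub>G\<^esub> l" and ?ghl = "g \<otimes>\<^bsub>G\<^esub> h \<otimes>\<^bsub>G\<^esub> l"
  have closed: "?gh \<in> carrier G" "?hl \<in> carrier G" "?ghl \<in> carrier G"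
    using g h l by simp_all
  have assoc: "g \<otimes>\<^bsub>G\<^esub> ?hl = ?ghl"
    using g h l by (simp add: G.m_assoc)
  define X where "X = mult_defect G T h l"
  define Y where "Y = mult_defect G T g h"
  have XY: "X \<in> carrier_mat m m" "Y \<in> carrier_mat m m"
    using g h l by (simp_all add: X_def Y_def)
  have NX: "N X \<le> 4 * e"
    unfolding X_def using h l close mult by (intro mult_defect_norm_le) auto
  have NY: "N Y \<le> 4 * e"
    unfolding Y_def using g h close mult by (intro mult_defect_norm_le) auto
  have "N (adj (P ?hl) * adj (P g) - adj (P ?ghl)) = N (adj (P g * P ?hl) - adj (P ?ghl))"
    using g closed by (simp add: adj_mult[of "P g" m m "P ?hl" m])
  also have "\<dots> = N (mult_defect G P g ?hl)"
    using N_adj_diff[OF unitary_mult[OF P_unitary P_unitary] P_unitary] g closed assoc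
    by (simp add: mult_defect_def)
  finally have ND1: "N (adj (P ?hl) * adj (P g) - adj (P ?ghl)) \<le> e"
    using mult by simp
  have "N (P l * adj (P ?ghl) - adj (P ?gh)) = N (mult_defect G P ?gh l)"
    using N_mult_adj_diff[OF P_unitary _ P_unitary] l closed by (simp add: mult_defect_def)
  then have ND2: "N (P l * adj (P ?ghl) - adj (P ?gh)) \<le> e"
    using mult by simp
  have e: "0 \<le> e"
    using close[of g] N_nonneg[of "P g - T g"] g by (simp add: square_mat_closed)
  have N1: "N ((P g - T g) * X * adj (P ?hl) * adj (P g)) \<le> e * (4 * e)"
    using N_unitary_right[OF unitary_adj[OF P_unitary]] N_mult_le_mult[OF _ _ _ NX] close[of g]
      g closed XY by (simp add: square_mat_closed)
  have N2: "N (T g * X * (adj (P ?hl) * adj (P g) - adj (P ?ghl))) \<le> 4 * e * e"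
    using N_unitary_left[OF T_unitary[OF g]] N_mult_le_mult[OF _ _ _ ND1] NX g closed XY
    by (simp add: square_mat_closed)
  have N3: "N (Y * (T l - P l) * adj (P ?ghl)) \<le> 4 * e * e"
    using N_unitary_right[OF unitary_adj[OF P_unitary]] N_mult_le_mult[OF _ _ NY] close[of l]
      N_diff_commute l closed XY by (simp add: square_mat_closed)
  have N4: "N (Y * (P l * adj (P ?ghl) - adj (P ?gh))) \<le> 4 * e * e"
    using N_mult_le_mult[OF _ _ NY ND2] l closed XY by (simp add: square_mat_closed)
  have "N (coboundary G P (defect_cochain G P T) g h l)
      \<le> N ((P g - T g) * X * adj (P ?hl) * adj (P g))
        + N (T g * X * (adj (P ?hl) * adj (P g) - adj (P ?ghl)))
        + N (Y * (T l - P l) * adj (P ?ghl)) + N (Y * (P l * adj (P ?ghl) - adj (P ?gh)))"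
    unfolding coboundary_defect_cochain_expansion[OF g h l] X_def[symmetric] Y_def[symmetric]
    using g l closed XY by (intro N_add4_le) (simp_all add: square_mat_closed)
  also have "\<dots> \<le> 16 * e\<^sup>2"
    using N1 N2 N3 N4 by (simp add: power2_eq_square)
  finally show ?thesis .
qed

end

section \<open>Words and finite presentations\<close>

lemma words_Nil [simp]: "[] \<in> words S"
  by (simp add: words_def)

lemma words_append [simp]: "u @ v \<in> words S \<longleftrightarrow> u \<in> words S \<and> v \<in> words S"
  by (auto simp: words_def)

lemma words_Cons [simp]: "(s, b) # w \<in> words S \<longleftrightarrow> s \<in> S \<and> w \<in> words S"
  by (auto simp: words_def)

text \<open>Derivations of \<^const>\<open>pres_eq\<close> may pass through words with letters outside \<open>S\<close>,
  where the generators need not be unitary; these letters are deleted.\<close>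

definition restrict_word :: "'s set \<Rightarrow> 's word \<Rightarrow> 's word"
  where "restrict_word S w = filter (\<lambda>x. fst x \<in> S) w"

lemma restrict_word_in_words [simp]: "restrict_word S w \<in> words S"
  by (auto simp: restrict_word_def words_def)

lemma restrict_word_id: "w \<in> words S \<Longrightarrow> restrict_word S w = w"
  by (auto simp: restrict_word_def words_def intro: filter_True)

lemma restrict_word_append [simp]:
  "restrict_word S (u @ v) = restrict_word S u @ restrict_word S v"
  by (simp add: restrict_word_def)

context
  fixes m :: nat and f :: "'s \<Rightarrow> complex mat" and S :: "'s set"
  assumes f_unitary: "\<forall>s\<in>S. unitary_k m (f s)"
begin

lemma mat_ev_unitary: "w \<in> words S \<Longrightarrow> unitary_k m (mat_ev m f w)"
proof (induction w)
  case Nil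
  then show ?case by (simp add: unitary_one)
next
  case (Cons x w)
  obtain s b where x: "x = (s, b)" by (cases x)
  then have "unitary_k m (if b then adj (f s) else f s)"
    using Cons.prems f_unitary unitary_adj by auto
  then show ?case
    using Cons x by (simp add: unitary_mult)
qed

lemma mat_ev_carrier [simp]: "w \<in> words S \<Longrightarrow> mat_ev m f w \<in> carrier_mat m m"
  using mat_ev_unitary unitary_carrier by blast

lemma mat_ev_append:
  "u \<in> words S \<Longrightarrow> v \<in> words S \<Longrightarrow> mat_ev m f (u @ v) = mat_ev m f u * mat_ev m f v"
proof (induction u)
  case Nil
  then show ?case by (simp add: left_mult_one_mat[of _ m m])
next
  case (Cons x u)
  obtain s b where x: "x = (s, b)" by (cases x)
  then have "f s \<in> carrier_mat m m"
    using Cons.prems f_unitary unitary_carrier by auto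
  then show ?case
    using Cons x by (simp add: assoc_mult_mat[of _ m m _ m _ m])
qed

lemma mat_ev_cancel:
  "mat_ev m f (restrict_word S (u @ [(s, b), (s, \<not> b)] @ v)) = mat_ev m f (restrict_word S (u @ v))"
proof (cases "s \<in> S")
  case True
  let ?u = "restrict_word S u" and ?v = "restrict_word S v" and ?c = "[(s, b), (s, \<not> b)]"
  have c: "?c \<in> words S"
    using True by simp
  have "mat_ev m f ?c = 1\<^sub>m m"
    using f_unitary True by (cases b) (auto simp: unitary_k_def right_mult_one_mat[of _ m m])
  moreover have "mat_ev m f (?u @ ?c @ ?v) = mat_ev m f ?u * (mat_ev m f ?c * mat_ev m f ?v)"
    using c by (simp only: mat_ev_append words_append restrict_word_in_words simp_thms)
  moreover have "restrict_word S (u @ ?c @ v) = ?u @ ?c @ ?v"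
    using True by (simp add: restrict_word_def)
  ultimately show ?thesis
    by (simp add: mat_ev_append left_mult_one_mat[of _ m m])
next
  case False
  then show ?thesis by (simp add: restrict_word_def)
qed

end

lemma (in group) grp_ev_carrier:
  "gen ` S \<subseteq> carrier G \<Longrightarrow> w \<in> words S \<Longrightarrow> grp_ev G gen w \<in> carrier G"
  by (induction w) (auto simp: image_subset_iff)

lemma (in group) grp_ev_append:
  assumes gen: "gen ` S \<subseteq> carrier G" and v: "v \<in> words S"
  shows "u \<in> words S \<Longrightarrow> grp_ev G gen (u @ v) = grp_ev G gen u \<otimes> grp_ev G gen v"
proof (induction u)
  case Nil
  then show ?case
    using grp_ev_carrier[OF gen v] by simp
next
  case (Cons x u)
  obtain s b where x: "x = (s, b)" by (cases x)
  then have "gen s \<in> carrier G"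
    using Cons.prems gen by auto
  then show ?case
    using Cons x grp_ev_carrier[OF gen] v by (simp add: m_assoc)
qed

lemma dfct_nonneg: "finite R \<Longrightarrow> 0 \<le> dfct m M R f"
  by (simp add: dfct_def)

lemma relator_defect_le: "finite R \<Longrightarrow> r \<in> R \<Longrightarrow> M (mat_ev m f r - 1\<^sub>m m) \<le> dfct m M R f"
  unfolding dfct_def by (intro Max_ge) auto

lemma pres_eq_mat_ev_diff_le:
  assumes "pres_eq R u v" and RS: "R \<subseteq> words S" and R: "finite R"
  shows "\<exists>C. \<forall>m M f. ui_submult_norm m M \<longrightarrow> (\<forall>s\<in>S. unitary_k m (f s)) \<longrightarrow>
    M (mat_ev m f (restrict_word S u) - mat_ev m f (restrict_word S v)) \<le> C * dfct m M R f"
proof -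
  have equal: "\<exists>C. \<forall>m M f. ui_submult_norm m M \<longrightarrow> (\<forall>s\<in>S. unitary_k m (f s)) \<longrightarrow>
      M (mat_ev m f (restrict_word S u) - mat_ev m f (restrict_word S v)) \<le> C * dfct m M R f"
    if "\<And>m f. \<forall>s\<in>S. unitary_k m (f s) \<Longrightarrow>
      mat_ev m f (restrict_word S u) = mat_ev m f (restrict_word S v)" for u v
  proof (intro exI[of _ 0] allI impI)
    fix m M f
    assume norm: "ui_submult_norm m M" and unit: "\<forall>s\<in>S. unitary_k m (f s)"
    interpret ui_norm m M by (fact ui_norm.intro[OF norm])
    show "M (mat_ev m f (restrict_word S u) - mat_ev m f (restrict_word S v)) \<le> 0 * dfct m M R f"
      using that unit by (simp add: minus_r_inv_mat[OF mat_ev_carrier])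
  qed
  show ?thesis
    using assms(1)
  proof (induction rule: pres_eq.induct)
    case (refl w)
    then show ?case
      by (intro equal) simp
  next
    case (sym u v)
    then obtain C where C: "\<forall>m M f. ui_submult_norm m M \<longrightarrow> (\<forall>s\<in>S. unitary_k m (f s)) \<longrightarrow>
        M (mat_ev m f (restrict_word S u) - mat_ev m f (restrict_word S v)) \<le> C * dfct m M R f"
      by blast
    show ?case
      using C ui_norm.N_diff_commute[OF ui_norm.intro] by (intro exI[of _ C]) simp
  next
    case (trans u v w)
    then obtain C1 C2 where
      C1: "\<forall>m M f. ui_submult_norm m M \<longrightarrow> (\<forall>s\<in>S. unitary_k m (f s)) \<longrightarrow>
        M (mat_ev m f (restrict_word S u) - mat_ev m f (restrict_word S v)) \<le> C1 * dfct m M R f"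
      and C2: "\<forall>m M f. ui_submult_norm m M \<longrightarrow> (\<forall>s\<in>S. unitary_k m (f s)) \<longrightarrow>
        M (mat_ev m f (restrict_word S v) - mat_ev m f (restrict_word S w)) \<le> C2 * dfct m M R f"
      by blast
    show ?case
    proof (intro exI[of _ "C1 + C2"] allI impI)
      fix m M f
      assume norm: "ui_submult_norm m M" and unit: "\<forall>s\<in>S. unitary_k m (f s)"
      interpret ui_norm m M by (fact ui_norm.intro[OF norm])
      let ?ev = "\<lambda>w. mat_ev m f (restrict_word S w)"
      have "M (?ev u - ?ev w) \<le> M (?ev u - ?ev v) + M (?ev v - ?ev w)"
        using unit by (intro N_diff_triangle) simp_all
      also have "\<dots> \<le> (C1 + C2) * dfct m M R f"
        using C1 C2 norm unit by (simp add: distrib_right add_mono)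
      finally show "M (?ev u - ?ev w) \<le> (C1 + C2) * dfct m M R f" .
    qed
  next
    case (cancel u s b v)
    then show ?case
      by (intro equal) (rule mat_ev_cancel)
  next
    case (relator r u v)
    have r: "r \<in> words S"
      using relator RS by auto
    show ?case
    proof (intro exI[of _ 1] allI impI)
      fix m M f
      assume norm: "ui_submult_norm m M" and unit: "\<forall>s\<in>S. unitary_k m (f s)"
      interpret ui_norm m M by (fact ui_norm.intro[OF norm])
      interpret R: ring "ring_mat TYPE(complex) m ()" by (rule ring_mat)
      let ?u = "mat_ev m f (restrict_word S u)" and ?r = "mat_ev m f r"
        and ?v = "mat_ev m f (restrict_word S v)"
      have c: "?u \<in> carrier_mat m m" "?r \<in> carrier_mat m m" "?v \<in> carrier_mat m m"
        using unit r by simp_all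
      have "mat_ev m f (restrict_word S (u @ r @ v)) - mat_ev m f (restrict_word S (u @ v))
          = ?u * ((?r - 1\<^sub>m m) * ?v)"
        using R.mult_diff_one_factor[of ?u ?r ?v] unit r c
        by (simp add: restrict_word_id mat_ev_append mat_ring_ops square_mat_closed)
      also have "M \<dots> = M (?r - 1\<^sub>m m)"
        using N_unitary_left N_unitary_right unit r c by (simp add: mat_ev_unitary square_mat_closed)
      also have "\<dots> \<le> 1 * dfct m M R f"
        using relator_defect_le[OF R relator] by simp
      finally show "M (mat_ev m f (restrict_word S (u @ r @ v)) - mat_ev m f (restrict_word S (u @ v)))
          \<le> 1 * dfct m M R f" .
    qed
  qed
qed

lemma section_mult_defect_le:
  assumes pres: "finite_presentation G S R gen"
    and sigma: "\<And>g. g \<in> carrier G \<Longrightarrow> sigma g \<in> words S \<and> grp_ev G gen (sigma g) = g"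
    and x: "x \<in> carrier G" and y: "y \<in> carrier G"
  shows "\<exists>C. \<forall>m M f. ui_submult_norm m M \<longrightarrow> (\<forall>s\<in>S. unitary_k m (f s)) \<longrightarrow>
    M (mult_defect G (\<lambda>z. mat_ev m f (sigma z)) x y) \<le> C * dfct m M R f"
proof -
  interpret G: group G
    using pres by (simp add: finite_presentation_def)
  have RS: "R \<subseteq> words S" and R: "finite R" and gen: "gen ` S \<subseteq> carrier G"
    and eval_eq: "\<And>u v. u \<in> words S \<Longrightarrow> v \<in> words S \<Longrightarrow>
      grp_ev G gen u = grp_ev G gen v \<longleftrightarrow> pres_eq R u v"
    using pres by (auto simp: finite_presentation_def)
  let ?xy = "x \<otimes>\<^bsub>G\<^esub> y"
  have words: "sigma x \<in> words S" "sigma y \<in> words S" "sigma ?xy \<in> words S"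
    using sigma x y by simp_all
  have "grp_ev G gen (sigma x @ sigma y) = grp_ev G gen (sigma ?xy)"
    using G.grp_ev_append[OF gen words(2) words(1)] sigma x y by simp
  then have "pres_eq R (sigma x @ sigma y) (sigma ?xy)"
    using eval_eq words by simp
  then obtain C where "\<forall>m M f. ui_submult_norm m M \<longrightarrow> (\<forall>s\<in>S. unitary_k m (f s)) \<longrightarrow>
      M (mat_ev m f (restrict_word S (sigma x @ sigma y)) - mat_ev m f (restrict_word S (sigma ?xy)))
        \<le> C * dfct m M R f"
    using pres_eq_mat_ev_diff_le[OF _ RS R] by blast
  then show ?thesis
    using words by (intro exI[of _ C]) (simp add: mult_defect_def restrict_word_id mat_ev_append)
qed

lemma phiU_rep_mult_defect_bigO:
  assumes pres: "finite_presentation G S R gen"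
    and sigma: "\<And>g. g \<in> carrier G \<Longrightarrow> sigma g \<in> words S \<and> grp_ev G gen (sigma g) = g"
    and norms: "\<And>m. ui_submult_norm m (N m)"
    and phi_unitary: "\<And>n s. s \<in> S \<Longrightarrow> unitary_k (k n) (phi n s)"
    and x: "x \<in> carrier G" and y: "y \<in> carrier G"
  shows "bigO_U U (\<lambda>n. N (k n) (mult_defect G (phiU_rep k phi sigma n) x y))
    (\<lambda>n. dfct (k n) (N (k n)) R (phi n))"
proof -
  obtain C where "\<forall>m M f. ui_submult_norm m M \<longrightarrow> (\<forall>s\<in>S. unitary_k m (f s)) \<longrightarrow>
      M (mult_defect G (\<lambda>z. mat_ev m f (sigma z)) x y) \<le> C * dfct m M R f"
    using section_mult_defect_le[OF pres sigma x y] by blast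
  then have "N (k n) (mult_defect G (phiU_rep k phi sigma n) x y) \<le> C * dfct (k n) (N (k n)) R (phi n)"
    for n
    using norms phi_unitary by (simp add: phiU_rep_def[abs_def])
  then show ?thesis
    unfolding bigO_U_def by (intro exI[of _ C] always_eventually) simp
qed

section \<open>The cocycle in the ultraproduct\<close>

lemma alpha_rep_eq_smult:
  assumes R: "finite R"
    and carrier: "phit n x \<in> carrier_mat (k n) (k n)" "phit n y \<in> carrier_mat (k n) (k n)"
      "phit n (x \<otimes>\<^bsub>G\<^esub> y) \<in> carrier_mat (k n) (k n)"
      "phiU_rep k phi sigma n (x \<otimes>\<^bsub>G\<^esub> y) \<in> carrier_mat (k n) (k n)"
  shows "alpha_rep G k N R phi sigma phit n x y =
    complex_of_real (1 / dfct (k n) (N (k n)) R (phi n))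
      \<cdot>\<^sub>m defect_cochain G (phiU_rep k phi sigma n) (phit n) x y"
proof (cases "dfct (k n) (N (k n)) R (phi n) > 0")
  case True
  then show ?thesis
    using carrier
    by (simp add: alpha_rep_def c_rep_def defect_cochain_def mult_defect_def
        mult_smult_assoc_mat[of _ "k n" "k n" _ "k n"] square_mat_closed)
next
  case False
  then have "dfct (k n) (N (k n)) R (phi n) = 0"
    using dfct_nonneg[OF R] by (simp add: order_less_le)
  moreover have "defect_cochain G (phiU_rep k phi sigma n) (phit n) x y \<in> carrier_mat (k n) (k n)"
    using carrier by (simp add: defect_cochain_def mult_defect_def square_mat_closed)
  then have "0 \<cdot>\<^sub>m defect_cochain G (phiU_rep k phi sigma n) (phit n) x y = 0\<^sub>m (k n) (k n)"
    by (intro eq_matI) auto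
  ultimately show ?thesis
    using carrier by (simp add: alpha_rep_def c_rep_def left_mult_zero_mat[of _ "k n" "k n"])
qed

lemma alpha_rep_coboundary_norm_le:
  assumes maps: "unitary_maps (k n) (N (k n)) G (phiU_rep k phi sigma n) (phit n)"
    and R: "finite R"
    and g: "g \<in> carrier G" and h: "h \<in> carrier G" and l: "l \<in> carrier G"
    and close: "\<And>x. x \<in> {g, h, l, g \<otimes>\<^bsub>G\<^esub> h, h \<otimes>\<^bsub>G\<^esub> l} \<Longrightarrow>
      N (k n) (phiU_rep k phi sigma n x - phit n x) \<le> C * dfct (k n) (N (k n)) R (phi n)"
    and mult: "\<And>x y. (x, y) \<in> {(g, h), (h, l), (g \<otimes>\<^bsub>G\<^esub> h, l), (g, h \<otimes>\<^bsub>G\<^esub> l)} \<Longrightarrow>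
      N (k n) (mult_defect G (phiU_rep k phi sigma n) x y) \<le> C * dfct (k n) (N (k n)) R (phi n)"
  shows "N (k n) (coboundary G (phiU_rep k phi sigma n) (alpha_rep G k N R phi sigma phit n) g h l)
    \<in> {0 .. 16 * C\<^sup>2 * dfct (k n) (N (k n)) R (phi n)}"
proof -
  interpret unitary_maps "k n" "N (k n)" G "phiU_rep k phi sigma n" "phit n"
    by (fact maps)
  define d where "d = dfct (k n) (N (k n)) R (phi n)"
  let ?W = "coboundary G (phiU_rep k phi sigma n) (defect_cochain G (phiU_rep k phi sigma n) (phit n)) g h l"
  have d: "0 \<le> d"
    unfolding d_def by (rule dfct_nonneg[OF R])
  have "coboundary G (phiU_rep k phi sigma n) (alpha_rep G k N R phi sigma phit n) g h l
      = coboundary G (phiU_rep k phi sigma n)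
          (\<lambda>x y. complex_of_real (1 / d) \<cdot>\<^sub>m defect_cochain G (phiU_rep k phi sigma n) (phit n) x y) g h l"
    using g h l by (simp add: coboundary_def alpha_rep_eq_smult[OF R] d_def)
  also have "\<dots> = complex_of_real (1 / d) \<cdot>\<^sub>m ?W"
    using g h l by (intro coboundary_smult[where m="k n"]) (simp_all add: defect_cochain_carrier)
  finally have eq: "coboundary G (phiU_rep k phi sigma n) (alpha_rep G k N R phi sigma phit n) g h l
    = complex_of_real (1 / d) \<cdot>\<^sub>m ?W" .
  have W: "?W \<in> carrier_mat (k n) (k n)"
    using g h l by (simp add: coboundary_def defect_cochain_carrier square_mat_closed)
  have "N (k n) ?W \<le> 16 * (C * d)\<^sup>2"
    using g h l close mult unfolding d_def by (intro coboundary_defect_cochain_norm_le) auto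
  then have "1 / d * N (k n) ?W \<le> 16 * C\<^sup>2 * d"
    using d by (cases "d = 0") (auto simp: field_simps power2_eq_square)
  moreover have "cmod (complex_of_real (1 / d)) = 1 / d"
    using d by (simp only: norm_of_real) simp
  then have "N (k n) (coboundary G (phiU_rep k phi sigma n) (alpha_rep G k N R phi sigma phit n) g h l)
      = 1 / d * N (k n) ?W"
    by (simp only: eq N_smult[OF W])
  ultimately show ?thesis
    using d N_nonneg[OF W] by (simp add: d_def)
qed

lemma bigO_U_common_constant:
  assumes "finite F" "\<And>x. x \<in> F \<Longrightarrow> bigO_U U x y" "\<And>n. 0 \<le> y n"
  shows "\<exists>C. eventually (\<lambda>n. \<forall>x\<in>F. x n \<le> C * y n) U"
  using assms(1,2)
proof (induction F rule: finite_induct)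
  case empty
  then show ?case by simp
next
  case (insert x F)
  obtain C1 where C1: "eventually (\<lambda>n. \<forall>x\<in>F. x n \<le> C1 * y n) U"
    using insert.IH insert.prems by blast
  obtain C2 where C2: "eventually (\<lambda>n. x n \<le> C2 * y n) U"
    using insert.prems[of x] by (auto simp: bigO_U_def)
  have "eventually (\<lambda>n. \<forall>z\<in>insert x F. z n \<le> max C1 C2 * y n) U"
    using C1 C2
  proof eventually_elim
    case (elim n)
    have "C1 * y n \<le> max C1 C2 * y n" "C2 * y n \<le> max C1 C2 * y n"
      using assms(3)[of n] by (simp_all add: mult_right_mono)
    then show ?case
      using elim by (metis insert_iff order_trans)
  qed
  then show ?case ..
qed

lemma zero_in_MU_if_eventually_le:
  assumes bound: "eventually (\<lambda>n. N (k n) (T n) \<in> {0 .. C * d n}) U" and d: "(d \<longlongrightarrow> 0) U"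
  shows "zero_in_MU U k N T"
proof -
  have lower: "eventually (\<lambda>n. 0 \<le> N (k n) (T n)) U"
    and upper: "eventually (\<lambda>n. N (k n) (T n) \<le> C * d n) U"
    using bound by (auto elim: eventually_mono)
  have "((\<lambda>n. C * d n) \<longlongrightarrow> 0) U"
    using tendsto_mult_right_zero[OF d] .
  then show ?thesis
    unfolding zero_in_MU_def by (rule tendsto_sandwich[OF lower upper tendsto_const])
qed

theorem corollary3p2:
  fixes U :: "nat filter"
    and k :: "nat \<Rightarrow> nat"
    and N :: "nat \<Rightarrow> complex mat \<Rightarrow> real"
    and G :: "('g, 'b) monoid_scheme"
    and S :: "'s set" and R :: "'s word set" and gen :: "'s \<Rightarrow> 'g"
    and phi :: "nat \<Rightarrow> 's \<Rightarrow> complex mat"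
    and sigma :: "'g \<Rightarrow> 's word"
    and phit :: "nat \<Rightarrow> 'g \<Rightarrow> complex mat"
  assumes U: "nonprincipal_ultrafilter U"
    and norms: "\<And>m. ui_submult_norm m (N m)"
    and pres: "finite_presentation G S R gen"
    and phi_unitary: "\<And>n s. s \<in> S \<Longrightarrow> unitary_k (k n) (phi n s)"
    and def_lim: "((\<lambda>n. dfct (k n) (N (k n)) R (phi n)) \<longlongrightarrow> 0) U"
    and sigma: "\<And>g. g \<in> carrier G \<Longrightarrow> sigma g \<in> words S \<and> grp_ev G gen (sigma g) = g"
    and phit_unitary: "\<And>n g. g \<in> carrier G \<Longrightarrow> unitary_k (k n) (phit n g)"
    and phit_one: "\<And>n. phit n \<one>\<^bsub>G\<^esub> = 1\<^sub>m (k n)"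
    and phit_inv: "\<And>n g. g \<in> carrier G \<Longrightarrow> phit n (inv\<^bsub>G\<^esub> g) = adj (phit n g)"
    and phit_close: "\<And>g. g \<in> carrier G \<Longrightarrow>
       bigO_U U (\<lambda>n. N (k n) (mat_ev (k n) (phi n) (sigma g) - phit n g))
                (\<lambda>n. dfct (k n) (N (k n)) R (phi n))"
  shows "\<forall>g\<in>carrier G. \<forall>h\<in>carrier G. \<forall>l\<in>carrier G.
     zero_in_MU U k N (\<lambda>n.
        pi_rep k phi sigma n g (alpha_rep G k N R phi sigma phit n h l)
        - alpha_rep G k N R phi sigma phit n (g \<otimes>\<^bsub>G\<^esub> h) l
        + alpha_rep G k N R phi sigma phit n g (h \<otimes>\<^bsub>G\<^esub> l)
        - alpha_rep G k N R phi sigma phit n g h)"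
proof -
  interpret G: group G
    using pres by (simp add: finite_presentation_def)
  have R: "finite R"
    using pres by (simp add: finite_presentation_def)
  let ?P = "phiU_rep k phi sigma" and ?d = "\<lambda>n. dfct (k n) (N (k n)) R (phi n)"
  have maps: "unitary_maps (k n) (N (k n)) G (?P n) (phit n)" for n
    using norms phi_unitary sigma phit_unitary G.group_axioms
    by unfold_locales (auto simp: phiU_rep_def intro: mat_ev_unitary[of S])
  define approx where "approx x = (\<lambda>n. N (k n) (?P n x - phit n x))" for x
  define defect where "defect x y = (\<lambda>n. N (k n) (mult_defect G (?P n) x y))" for x y
  have bigO: "bigO_U U (approx x) ?d" "bigO_U U (defect x y) ?d"
    if "x \<in> carrier G" "y \<in> carrier G" for x y
    using phit_close phiU_rep_mult_defect_bigO[OF pres sigma norms phi_unitary] that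
    by (simp_all add: approx_def defect_def phiU_rep_def)
  have "zero_in_MU U k N (\<lambda>n. coboundary G (?P n) (alpha_rep G k N R phi sigma phit n) g h l)"
    if g: "g \<in> carrier G" and h: "h \<in> carrier G" and l: "l \<in> carrier G" for g h l
  proof -
    let ?F = "{approx g, approx h, approx l, approx (g \<otimes>\<^bsub>G\<^esub> h), approx (h \<otimes>\<^bsub>G\<^esub> l),
      defect g h, defect h l, defect (g \<otimes>\<^bsub>G\<^esub> h) l, defect g (h \<otimes>\<^bsub>G\<^esub> l)}"
    have "\<exists>C. eventually (\<lambda>n. \<forall>x\<in>?F. x n \<le> C * ?d n) U"
      by (rule bigO_U_common_constant) (use bigO g h l dfct_nonneg[OF R] in auto)
    then obtain C where "eventually (\<lambda>n. \<forall>x\<in>?F. x n \<le> C * ?d n) U" ..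
    then have "eventually (\<lambda>n. N (k n) (coboundary G (?P n) (alpha_rep G k N R phi sigma phit n) g h l)
        \<in> {0 .. 16 * C\<^sup>2 * ?d n}) U"
    proof eventually_elim
      case (elim n)
      show ?case
        by (rule alpha_rep_coboundary_norm_le[where k = k and N = N and n = n and phit = phit])
          (use maps R g h l elim in \<open>auto simp: approx_def defect_def\<close>)
    qed
    then show ?thesis
      using def_lim by (rule zero_in_MU_if_eventually_le)
  qed
  then show ?thesis
    unfolding coboundary_def pi_rep_def by blast
qed

end
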